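(* Let $X=\{a_1,\dots,a_\ell\}$ be a finite set of $\ell$ distinct points and $N\ge 2$, and let $\mu_*$ be an extreme point of $\mathcal{P}_{N\text{-}rep}(X^2)$ with one-point marginal $\lambda$. Then: (a) $\mu_*$ is the unique maximizer over $\mu\in\mathcal{P}_{N\text{-}rep}(X^2)$ of $$J_\lambda[\mu]=\frac{2N}{N-1}\sum_{i=1}^\ell\lambda_i(M_1\mu)_i+W[\mu];$$ (b) in particular, $\mu_*$ is the unique maximizer of $W[\mu]$ over $\mu\in\mathcal{P}_{N\text{-}rep}(X^2)$ subject to $M_1\mu=\lambda$.
   Context: Probability measures on $X$ are identified with vectors $(\lambda_i)_{i}$, $\lambda_i=\lambda(\{a_i\})$; for a measure $\mu$ on $X^2$, $\mu_{ij}=\mu(\{(a_i,a_j)\})$ and $(M_1\mu)_i=\sum_j\mu_{ij}$ is its first marginal. A probability measure $\gamma$ on $X^N$ is symmetric if $\gamma(A_1\times\cdots\times A_N)=\gamma(A_{\sigma(1)}\times\cdots\times A_{\sigma(N)})$ for all $A_i\subseteq X$ and all permutations $\sigma$; a probability measure $\mu$ on $X^2$ is $N$-representable if $\mu(A)=\gamma(A\times X^{N-2})$ for all $A\subseteq X^2$ for some symmetric probability measure $\gamma$ on $X^N$; $\mathcal{P}_{N\text{-}rep}(X^2)$ is the set of these. $W[\mu]=\int_{X\times X}d(x,y)^p\,d\mu(x,y)=\sum_{i\ne j}\mu_{ij}$ is the Wasserstein cost ($1\le p<\infty$) with respect to the discrete metric $d(x,y)=1$ if $x\neq y$, $d(x,x)=0$.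 *)

theory Defs
  imports "HOL-Analysis.Analysis" "HOL-Combinatorics.Permutations"
begin

text \<open>Discrete probability measures on the finite set X, on X^2 and on X^N are
  represented by their point masses (functions to real vanishing outside the carrier).
  N-tuples are extensional functions on {..<N}; coordinates 0 and 1 are the first two.\<close>

definition tuples :: "'a set \<Rightarrow> nat \<Rightarrow> (nat \<Rightarrow> 'a) set" where
  "tuples X N = PiE {..<N} (\<lambda>_. X)"

definition prob_on :: "'b set \<Rightarrow> ('b \<Rightarrow> real) \<Rightarrow> bool" where
  "prob_on S m \<longleftrightarrow> (\<forall>x. 0 \<le> m x) \<and> (\<forall>x. x \<notin> S \<longrightarrow> m x = 0) \<and> (\<Sum>x\<in>S. m x) = 1"

definition meas :: "('b \<Rightarrow> real) \<Rightarrow> 'b set \<Rightarrow> real" where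
  "meas m A = (\<Sum>x\<in>A. m x)"

definition symmetric_meas :: "'a set \<Rightarrow> nat \<Rightarrow> ((nat \<Rightarrow> 'a) \<Rightarrow> real) \<Rightarrow> bool" where
  "symmetric_meas X N \<gamma> \<longleftrightarrow>
     (\<forall>A \<sigma>. (\<forall>i<N. A i \<subseteq> X) \<longrightarrow> \<sigma> permutes {..<N} \<longrightarrow>
        meas \<gamma> (PiE {..<N} A) = meas \<gamma> (PiE {..<N} (\<lambda>i. A (\<sigma> i))))"

definition N_rep :: "'a set \<Rightarrow> nat \<Rightarrow> ('a \<times> 'a \<Rightarrow> real) set" where
  "N_rep X N = {\<mu>. prob_on (X \<times> X) \<mu> \<and>
     (\<exists>\<gamma>. prob_on (tuples X N) \<gamma> \<and> symmetric_meas X N \<gamma> \<and>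
        (\<forall>A. A \<subseteq> X \<times> X \<longrightarrow>
           meas \<mu> A = meas \<gamma> {t \<in> tuples X N. (t 0, t 1) \<in> A}))}"

text \<open>Extreme point of a set of functions (same shape as the library's extreme_point_of,
  with open segments written out since function spaces carry no real_vector instance).\<close>
definition extreme_pt :: "('b \<Rightarrow> real) \<Rightarrow> ('b \<Rightarrow> real) set \<Rightarrow> bool" where
  "extreme_pt x S \<longleftrightarrow> x \<in> S \<and>
     (\<forall>a\<in>S. \<forall>b\<in>S. \<forall>u. 0 < u \<and> u < 1 \<and> a \<noteq> b \<longrightarrow>
        x \<noteq> (\<lambda>p. (1 - u) * a p + u * b p))"

definition marg1 :: "'a set \<Rightarrow> ('a \<times> 'a \<Rightarrow> real) \<Rightarrow> 'a \<Rightarrow> real" where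
  "marg1 X \<mu> x = (\<Sum>y\<in>X. \<mu> (x, y))"

text \<open>Wasserstein cost for the discrete metric: d(x,y)^p = 1 if x \<noteq> y, 0 otherwise.\<close>
definition W_cost :: "'a set \<Rightarrow> ('a \<times> 'a \<Rightarrow> real) \<Rightarrow> real" where
  "W_cost X \<mu> = (\<Sum>p\<in>X \<times> X. (if fst p \<noteq> snd p then 1 else 0) * \<mu> p)"

definition J_fun :: "'a set \<Rightarrow> nat \<Rightarrow> ('a \<Rightarrow> real) \<Rightarrow> ('a \<times> 'a \<Rightarrow> real) \<Rightarrow> real" where
  "J_fun X N lam \<mu> = (2 * real N / (real N - 1)) * (\<Sum>x\<in>X. lam x * marg1 X \<mu> x) + W_cost X \<mu>"

end

theory Submission
  imports Defs
begin

text \<open>Every N-representable \<open>\<mu>\<close> is the pair marginal of a symmetric \<open>\<gamma>\<close> on \<open>X^N\<close>, hence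
  the mixture \<open>\<Sum>t. \<gamma> t * P t\<close> of the pair marginals \<open>P t\<close> of the symmetrised Dirac masses,
  and \<open>P t\<close> only depends on the occupation numbers of the tuple \<open>t\<close>. The functional \<open>J\<^sub>\<lambda>\<close> is
  linear, and if \<open>\<lambda>\<close> is the one-point marginal of \<open>P s\<close> then
  \<open>N (N - 1) (J\<^sub>\<lambda>[P s] - J\<^sub>\<lambda>[P t]) = \<Sum>x. (occ s x - occ t x)\<^sup>2\<close>, so \<open>P s\<close> is the unique maximiser
  of \<open>J\<^sub>\<lambda>\<close>. An extreme point is some \<open>P s\<close>: otherwise, conditioning \<open>\<gamma>\<close> on the occupation class
  of a point of its support and on the complement writes it as a proper convex combination of
  \<open>P s\<close> and a measure with strictly smaller \<open>J\<^sub>\<lambda>\<close>. On \<open>{M\<^sub>1 \<mu> = \<lambda>}\<close>, \<open>J\<^sub>\<lambda>\<close> and \<open>W\<close> differ by a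
  constant.\<close>

definition occ :: "nat \<Rightarrow> (nat \<Rightarrow> 'a) \<Rightarrow> 'a \<Rightarrow> real" where
  "occ N t x = (\<Sum>a<N. if t a = x then 1 else 0)"

definition permute_tuple :: "nat \<Rightarrow> (nat \<Rightarrow> nat) \<Rightarrow> (nat \<Rightarrow> 'a) \<Rightarrow> nat \<Rightarrow> 'a" where
  "permute_tuple N \<sigma> t = (\<lambda>i\<in>{..<N}. t (\<sigma> i))"

definition perm_invariant :: "'a set \<Rightarrow> nat \<Rightarrow> ((nat \<Rightarrow> 'a) \<Rightarrow> real) \<Rightarrow> bool" where
  "perm_invariant X N g \<longleftrightarrow>
     (\<forall>t\<in>tuples X N. \<forall>\<sigma>. \<sigma> permutes {..<N} \<longrightarrow> g (permute_tuple N \<sigma> t) = g t)"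

definition pair_marg :: "'a set \<Rightarrow> nat \<Rightarrow> ((nat \<Rightarrow> 'a) \<Rightarrow> real) \<Rightarrow> 'a \<times> 'a \<Rightarrow> real" where
  "pair_marg X N g p = (\<Sum>t\<in>tuples X N. g t * (if (t 0, t 1) = p then 1 else 0))"

text \<open>The two-point marginal of the symmetrisation of the Dirac mass at \<open>t\<close>: an ordered pair
  of distinct positions of \<open>t\<close>, drawn uniformly, carries \<open>(x, y)\<close> with probability
  \<open>occ x * (occ y - [x = y]) / (N * (N - 1))\<close>.\<close>
definition sym_delta :: "'a set \<Rightarrow> nat \<Rightarrow> (nat \<Rightarrow> 'a) \<Rightarrow> 'a \<times> 'a \<Rightarrow> real" where
  "sym_delta X N t = (\<lambda>(x, y). if x \<in> X \<and> y \<in> X then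
     (occ N t x * occ N t y - (if x = y then occ N t x else 0)) / (real N * (real N - 1)) else 0)"

lemma finite_tuples: "finite X \<Longrightarrow> finite (tuples X N)"
  unfolding tuples_def by (simp add: finite_PiE)

lemma tuple_component_in: "t \<in> tuples X N \<Longrightarrow> a < N \<Longrightarrow> t a \<in> X"
  unfolding tuples_def by (simp add: PiE_iff)

lemma permute_tuple_in_PiE:
  assumes "\<sigma> permutes {..<N}" and "t \<in> PiE {..<N} A"
  shows "permute_tuple N \<sigma> t \<in> PiE {..<N} (\<lambda>i. A (\<sigma> i))"
  using assms permutes_in_image[OF assms(1)] unfolding permute_tuple_def by (auto simp: PiE_iff)

lemma permute_tuple_in_tuples:
  "\<sigma> permutes {..<N} \<Longrightarrow> t \<in> tuples X N \<Longrightarrow> permute_tuple N \<sigma> t \<in> tuples X N"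
  using permute_tuple_in_PiE[of \<sigma> N t "\<lambda>_. X"] unfolding tuples_def by simp

lemma permute_tuple_inv:
  assumes \<sigma>: "\<sigma> permutes {..<N}" and t: "t \<in> extensional {..<N}"
  shows "permute_tuple N (inv \<sigma>) (permute_tuple N \<sigma> t) = t"
proof
  fix i show "permute_tuple N (inv \<sigma>) (permute_tuple N \<sigma> t) i = t i"
    using t permutes_in_image[OF permutes_inv[OF \<sigma>]] permutes_inverses(1)[OF \<sigma>]
    by (cases "i < N") (auto simp: permute_tuple_def extensional_def)
qed

lemma bij_betw_permute_tuple:
  assumes \<sigma>: "\<sigma> permutes {..<N}"
  shows "bij_betw (permute_tuple N \<sigma>) (PiE {..<N} A) (PiE {..<N} (\<lambda>i. A (\<sigma> i)))"
proof (rule bij_betw_byWitness[where f'="permute_tuple N (inv \<sigma>)"])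
  have \<sigma>': "inv \<sigma> permutes {..<N}" using permutes_inv[OF \<sigma>] .
  show "\<forall>t\<in>PiE {..<N} A. permute_tuple N (inv \<sigma>) (permute_tuple N \<sigma> t) = t"
    using permute_tuple_inv[OF \<sigma>] by (auto simp: PiE_iff)
  show "\<forall>t\<in>PiE {..<N} (\<lambda>i. A (\<sigma> i)). permute_tuple N \<sigma> (permute_tuple N (inv \<sigma>) t) = t"
    using permute_tuple_inv[OF \<sigma>'] permutes_inv_inv[OF \<sigma>] by (auto simp: PiE_iff)
  show "permute_tuple N \<sigma> ` PiE {..<N} A \<subseteq> PiE {..<N} (\<lambda>i. A (\<sigma> i))"
    using permute_tuple_in_PiE[OF \<sigma>] by blast
  have "(\<lambda>i. A (\<sigma> (inv \<sigma> i))) = A"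
    using permutes_inverses(1)[OF \<sigma>] by simp
  then show "permute_tuple N (inv \<sigma>) ` PiE {..<N} (\<lambda>i. A (\<sigma> i)) \<subseteq> PiE {..<N} A"
    using permute_tuple_in_PiE[OF \<sigma>', of _ "\<lambda>i. A (\<sigma> i)"] by auto
qed

lemma bij_betw_permute_tuple_tuples:
  "\<sigma> permutes {..<N} \<Longrightarrow> bij_betw (permute_tuple N \<sigma>) (tuples X N) (tuples X N)"
  using bij_betw_permute_tuple[of \<sigma> N "\<lambda>_. X"] unfolding tuples_def by simp

lemma symmetric_meas_iff_perm_invariant:
  "symmetric_meas X N g \<longleftrightarrow> perm_invariant X N g"
proof
  assume sym: "symmetric_meas X N g"
  show "perm_invariant X N g" unfolding perm_invariant_def
  proof (intro ballI allI impI)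
    fix t \<sigma> assume t: "t \<in> tuples X N" and \<sigma>: "\<sigma> permutes {..<N}"
    have "PiE {..<N} (\<lambda>i. {t i}) = {t}"
      using t by (intro PiE_singleton) (simp add: tuples_def PiE_iff)
    moreover have "PiE {..<N} (\<lambda>i. {t (\<sigma> i)}) = {permute_tuple N \<sigma> t}"
      unfolding permute_tuple_def by (simp add: PiE_eq_singleton)
    moreover have "\<forall>i<N. {t i} \<subseteq> X"
      using tuple_component_in[OF t] by simp
    ultimately show "g (permute_tuple N \<sigma> t) = g t"
      using sym[unfolded symmetric_meas_def, rule_format, of "\<lambda>i. {t i}" \<sigma>] \<sigma>
      by (simp add: meas_def)
  qed
next
  assume inv: "perm_invariant X N g"
  show "symmetric_meas X N g" unfolding symmetric_meas_def
  proof (intro allI impI)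
    fix A \<sigma> assume A: "\<forall>i<N. A i \<subseteq> X" and \<sigma>: "\<sigma> permutes {..<N}"
    have sub: "PiE {..<N} A \<subseteq> tuples X N"
      using A unfolding tuples_def by (auto simp: PiE_iff)
    have "meas g (PiE {..<N} (\<lambda>i. A (\<sigma> i))) = (\<Sum>t\<in>PiE {..<N} A. g (permute_tuple N \<sigma> t))"
      unfolding meas_def using sum.reindex_bij_betw[OF bij_betw_permute_tuple[OF \<sigma>], of g] by simp
    also have "\<dots> = meas g (PiE {..<N} A)"
      using inv sub \<sigma> unfolding perm_invariant_def meas_def by (intro sum.cong) auto
    finally show "meas g (PiE {..<N} A) = meas g (PiE {..<N} (\<lambda>i. A (\<sigma> i)))" by simp
  qed
qed

lemma exists_permutes_0_1:
  fixes a b N :: nat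
  assumes "a < N" "b < N" "a \<noteq> b"
  shows "\<exists>\<sigma>. \<sigma> permutes {..<N} \<and> \<sigma> 0 = a \<and> \<sigma> 1 = b"
proof -
  define \<tau> where "\<tau> = Transposition.transpose 0 a"
  have "N \<ge> 2" using assms by linarith
  then have "Transposition.transpose (\<tau> 1) b \<circ> \<tau> permutes {..<N}"
    using assms unfolding \<tau>_def
    by (intro permutes_compose permutes_swap_id) (auto simp: Transposition.transpose_def)
  moreover have "(Transposition.transpose (\<tau> 1) b \<circ> \<tau>) 0 = a" "(Transposition.transpose (\<tau> 1) b \<circ> \<tau>) 1 = b"
    using assms unfolding \<tau>_def by (auto simp: Transposition.transpose_def)
  ultimately show ?thesis by blast
qed

lemma perm_invariant_pair_prob:
  assumes inv: "perm_invariant X N g" and ab: "a < N" "b < N" "a \<noteq> b"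
  shows "(\<Sum>t\<in>tuples X N. g t * ((if t a = x then 1 else 0) * (if t b = y then 1 else 0)))
       = pair_marg X N g (x, y)"
proof -
  obtain \<sigma> where \<sigma>: "\<sigma> permutes {..<N}" "\<sigma> 0 = a" "\<sigma> 1 = b"
    using exists_permutes_0_1[OF ab] by blast
  have N: "0 < N" "1 < N" using ab by auto
  let ?f = "\<lambda>t. g t * (if (t 0, t 1) = (x, y) then 1 else 0)"
  have "pair_marg X N g (x, y) = (\<Sum>t\<in>tuples X N. ?f (permute_tuple N \<sigma> t))"
    unfolding pair_marg_def using sum.reindex_bij_betw[OF bij_betw_permute_tuple_tuples[OF \<sigma>(1)], of ?f]
    by simp
  also have "\<dots> = (\<Sum>t\<in>tuples X N. g t * ((if t a = x then 1 else 0) * (if t b = y then 1 else 0)))"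
    using inv \<sigma> N unfolding perm_invariant_def by (intro sum.cong) (auto simp: permute_tuple_def)
  finally show ?thesis by simp
qed

lemma sum_if_neq:
  fixes f :: "'b \<Rightarrow> 'c::ab_group_add"
  assumes "finite A" and "x \<in> A"
  shows "(\<Sum>y\<in>A. if x \<noteq> y then f y else 0) = sum f A - f x"
proof -
  have "(\<Sum>y\<in>A. if x \<noteq> y then f y else 0) = (\<Sum>y\<in>A. f y - (if x = y then f y else 0))"
    by (intro sum.cong) auto
  then show ?thesis using assms by (simp add: sum_subtractf)
qed

lemma sum_offdiag:
  fixes f :: "nat \<Rightarrow> nat \<Rightarrow> 'b::ab_group_add"
  shows "(\<Sum>a<N. \<Sum>b<N. if a \<noteq> b then f a b else 0) = (\<Sum>a<N. \<Sum>b<N. f a b) - (\<Sum>a<N. f a a)"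
proof -
  have "(\<Sum>b<N. if a \<noteq> b then f a b else 0) = (\<Sum>b<N. f a b) - f a a" if "a < N" for a
    using that by (simp add: sum_if_neq)
  then show ?thesis by (simp add: sum_subtractf)
qed

lemma sum_offdiag_occ:
  "(\<Sum>a<N. \<Sum>b<N. if a \<noteq> b then (if t a = x then 1 else 0) * (if t b = y then 1 else 0) else 0)
   = occ N t x * occ N t y - (if x = y then occ N t x else (0::real))"
  unfolding sum_offdiag occ_def sum_product
  by (cases "x = y") (auto intro!: sum.cong sum.neutral)

lemma pair_marg_outside:
  assumes "N \<ge> 2" and "p \<notin> X \<times> X"
  shows "pair_marg X N g p = 0"
  unfolding pair_marg_def
proof (rule sum.neutral, intro ballI)
  fix t assume "t \<in> tuples X N"
  then have "(t 0, t 1) \<in> X \<times> X"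
    using tuple_component_in[of t X N 0] tuple_component_in[of t X N 1] assms(1) by simp
  then show "g t * (if (t 0, t 1) = p then 1 else 0) = 0" using assms(2) by auto
qed

lemma pair_marg_mixture:
  assumes inv: "perm_invariant X N g" and N: "N \<ge> 2"
  shows "pair_marg X N g = (\<lambda>p. \<Sum>t\<in>tuples X N. g t * sym_delta X N t p)"
proof
  fix p
  show "pair_marg X N g p = (\<Sum>t\<in>tuples X N. g t * sym_delta X N t p)"
  proof (cases "p \<in> X \<times> X")
    case False
    then show ?thesis using pair_marg_outside[OF N False] by (cases p) (auto simp: sym_delta_def)
  next
    case True
    obtain x y where p: "p = (x, y)" by (cases p)
    let ?e = "\<lambda>t a b. if a \<noteq> b then (if t a = x then 1 else 0) * (if t b = y then 1 else 0) else (0::real)"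
    have "real N * (real N - 1) * pair_marg X N g p
        = (\<Sum>a<N. \<Sum>b<N. if a \<noteq> b then pair_marg X N g p else 0)"
      unfolding sum_offdiag by (simp add: algebra_simps power2_eq_square)
    also have "\<dots> = (\<Sum>a<N. \<Sum>b<N. \<Sum>t\<in>tuples X N. g t * ?e t a b)"
      using perm_invariant_pair_prob[OF inv] unfolding p by (intro sum.cong) auto
    also have "\<dots> = (\<Sum>t\<in>tuples X N. g t * (\<Sum>a<N. \<Sum>b<N. ?e t a b))"
      by (simp add: sum_distrib_left sum.swap[of _ "tuples X N"])
    also have "\<dots> = (\<Sum>t\<in>tuples X N. g t * (real N * (real N - 1) * sym_delta X N t p))"
      using N True unfolding p sum_offdiag_occ by (simp add: sym_delta_def)
    also have "\<dots> = real N * (real N - 1) * (\<Sum>t\<in>tuples X N. g t * sym_delta X N t p)"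
      by (simp add: sum_distrib_left mult.left_commute)
    finally show ?thesis using N by simp
  qed
qed

lemma meas_pair_marg:
  assumes "finite X" and "finite A"
  shows "meas (pair_marg X N g) A = meas g {t \<in> tuples X N. (t 0, t 1) \<in> A}"
proof -
  have "meas (pair_marg X N g) A = (\<Sum>t\<in>tuples X N. \<Sum>p\<in>A. g t * (if (t 0, t 1) = p then 1 else 0))"
    unfolding meas_def pair_marg_def by (rule sum.swap)
  also have "\<dots> = (\<Sum>t\<in>tuples X N. if (t 0, t 1) \<in> A then g t else 0)"
    using assms(2) by (auto simp: sum_distrib_left[symmetric] sum.delta intro!: sum.cong)
  also have "\<dots> = meas g {t \<in> tuples X N. (t 0, t 1) \<in> A}"
    unfolding meas_def using finite_tuples[OF assms(1)] by (simp add: sum.inter_filter)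
  finally show ?thesis .
qed

lemma N_rep_iff:
  assumes X: "finite X" and N: "N \<ge> 2"
  shows "\<mu> \<in> N_rep X N \<longleftrightarrow>
    (\<exists>\<gamma>. prob_on (tuples X N) \<gamma> \<and> perm_invariant X N \<gamma> \<and> \<mu> = pair_marg X N \<gamma>)"
proof
  assume "\<mu> \<in> N_rep X N"
  then obtain \<gamma> where \<mu>: "prob_on (X \<times> X) \<mu>" and \<gamma>: "prob_on (tuples X N) \<gamma>"
    and sym: "symmetric_meas X N \<gamma>"
    and marg: "\<And>A. A \<subseteq> X \<times> X \<Longrightarrow> meas \<mu> A = meas \<gamma> {t \<in> tuples X N. (t 0, t 1) \<in> A}"
    unfolding N_rep_def by blast
  have "\<mu> p = pair_marg X N \<gamma> p" for p
  proof (cases "p \<in> X \<times> X")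
    case True
    then have "meas \<mu> {p} = meas (pair_marg X N \<gamma>) {p}"
      using marg meas_pair_marg[OF X] by simp
    then show ?thesis by (simp add: meas_def)
  next
    case False
    then have "\<mu> p = 0" using \<mu> unfolding prob_on_def by blast
    then show ?thesis using pair_marg_outside[OF N False] by simp
  qed
  then show "\<exists>\<gamma>. prob_on (tuples X N) \<gamma> \<and> perm_invariant X N \<gamma> \<and> \<mu> = pair_marg X N \<gamma>"
    using \<gamma> sym symmetric_meas_iff_perm_invariant by blast
next
  assume "\<exists>\<gamma>. prob_on (tuples X N) \<gamma> \<and> perm_invariant X N \<gamma> \<and> \<mu> = pair_marg X N \<gamma>"
  then obtain \<gamma> where \<gamma>: "prob_on (tuples X N) \<gamma>" and inv: "perm_invariant X N \<gamma>"
    and \<mu>: "\<mu> = pair_marg X N \<gamma>" by blast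
  have "{t \<in> tuples X N. (t 0, t 1) \<in> X \<times> X} = tuples X N"
    using tuple_component_in N by fastforce
  then have "meas \<mu> (X \<times> X) = 1"
    using \<gamma> meas_pair_marg[OF X] X unfolding \<mu> prob_on_def meas_def by simp
  then have "prob_on (X \<times> X) \<mu>"
    unfolding prob_on_def
  proof (intro conjI allI impI)
    fix p show "0 \<le> \<mu> p"
      using \<gamma> unfolding \<mu> pair_marg_def prob_on_def by (auto intro: sum_nonneg)
  next
    fix p assume "p \<notin> X \<times> X"
    then show "\<mu> p = 0" unfolding \<mu> by (rule pair_marg_outside[OF N])
  qed (simp add: meas_def)
  moreover have "\<forall>A. A \<subseteq> X \<times> X \<longrightarrow> meas \<mu> A = meas \<gamma> {t \<in> tuples X N. (t 0, t 1) \<in> A}"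
    using meas_pair_marg[OF X] X unfolding \<mu> by (meson finite_SigmaI finite_subset)
  ultimately show "\<mu> \<in> N_rep X N"
    unfolding N_rep_def using \<gamma> inv symmetric_meas_iff_perm_invariant by blast
qed

lemma marg1_mixture:
  "marg1 X (\<lambda>p. \<Sum>t\<in>T. w t * f t p) x = (\<Sum>t\<in>T. w t * marg1 X (f t) x)"
  unfolding marg1_def by (simp add: sum_distrib_left) (rule sum.swap)

lemma W_cost_mixture:
  "W_cost X (\<lambda>p. \<Sum>t\<in>T. w t * f t p) = (\<Sum>t\<in>T. w t * W_cost X (f t))"
  unfolding W_cost_def by (simp add: sum_distrib_left mult.left_commute) (rule sum.swap)

lemma J_fun_mixture:
  "J_fun X N lam (\<lambda>p. \<Sum>t\<in>T. w t * f t p) = (\<Sum>t\<in>T. w t * J_fun X N lam (f t))"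
proof -
  have "(\<Sum>x\<in>X. lam x * marg1 X (\<lambda>p. \<Sum>t\<in>T. w t * f t p) x)
      = (\<Sum>t\<in>T. w t * (\<Sum>x\<in>X. lam x * marg1 X (f t) x))"
    unfolding marg1_mixture by (simp add: sum_distrib_left mult.left_commute) (rule sum.swap)
  then show ?thesis unfolding J_fun_def W_cost_mixture
    by (simp add: sum.distrib distrib_left sum_distrib_left mult.left_commute)
qed

lemma sum_occ:
  assumes "t \<in> tuples X N" and "finite X"
  shows "(\<Sum>x\<in>X. occ N t x) = real N"
proof -
  have "(\<Sum>x\<in>X. occ N t x) = (\<Sum>a<N. \<Sum>x\<in>X. if t a = x then 1 else (0::real))"
    unfolding occ_def by (rule sum.swap)
  also have "\<dots> = (\<Sum>a<N. 1)"
    using tuple_component_in[OF assms(1)] assms(2) by (intro sum.cong) (auto simp: sum.delta)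
  finally show ?thesis by simp
qed

lemma occ_permute_tuple:
  assumes "\<sigma> permutes {..<N}"
  shows "occ N (permute_tuple N \<sigma> t) x = occ N t x"
  using sum.permute[OF assms, of "\<lambda>a. if t a = x then 1 else (0::real)"]
  unfolding occ_def permute_tuple_def by simp

definition same_occ :: "'a set \<Rightarrow> nat \<Rightarrow> (nat \<Rightarrow> 'a) \<Rightarrow> (nat \<Rightarrow> 'a) \<Rightarrow> bool" where
  "same_occ X N t s \<longleftrightarrow> (\<forall>x\<in>X. occ N t x = occ N s x)"

lemma sym_delta_cong: "same_occ X N t s \<Longrightarrow> sym_delta X N t = sym_delta X N s"
  unfolding same_occ_def sym_delta_def by (intro ext) (auto split: prod.split)

lemma marg1_sym_delta:
  assumes t: "t \<in> tuples X N" and X: "finite X" and N: "N \<ge> 2" and x: "x \<in> X"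
  shows "marg1 X (sym_delta X N t) x = occ N t x / real N"
proof -
  have "marg1 X (sym_delta X N t) x
      = (\<Sum>y\<in>X. occ N t x * occ N t y - (if x = y then occ N t x else 0)) / (real N * (real N - 1))"
    unfolding marg1_def sym_delta_def using x by (simp add: sum_divide_distrib)
  also have "\<dots> = (occ N t x * real N - occ N t x) / (real N * (real N - 1))"
    using x X by (simp add: sum_subtractf sum_distrib_left[symmetric] sum_occ[OF t X])
  also have "\<dots> = occ N t x / real N"
    using N by (simp add: field_simps)
  finally show ?thesis .
qed

lemma W_cost_sym_delta:
  assumes t: "t \<in> tuples X N" and X: "finite X" and N: "N \<ge> 2"
  shows "real N * (real N - 1) * W_cost X (sym_delta X N t) = real N ^ 2 - (\<Sum>x\<in>X. occ N t x ^ 2)"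
proof -
  have "real N * (real N - 1) * W_cost X (sym_delta X N t)
      = (\<Sum>x\<in>X. \<Sum>y\<in>X. if x \<noteq> y then occ N t x * occ N t y else 0)"
    unfolding W_cost_def sum.cartesian_product sym_delta_def sum_distrib_left
    using N by (intro sum.cong) auto
  also have "\<dots> = (\<Sum>x\<in>X. occ N t x * real N - occ N t x ^ 2)"
    using X by (intro sum.cong) (simp_all add: sum_if_neq sum_distrib_left[symmetric] sum_occ[OF t X]
        power2_eq_square)
  also have "\<dots> = real N ^ 2 - (\<Sum>x\<in>X. occ N t x ^ 2)"
    by (simp add: sum_subtractf sum_distrib_right[symmetric] sum_occ[OF t X] power2_eq_square)
  finally show ?thesis .
qed

lemma J_fun_sym_delta:
  assumes t: "t \<in> tuples X N" and X: "finite X" and N: "N \<ge> 2"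
  shows "real N * (real N - 1) * J_fun X N lam (sym_delta X N t)
       = 2 * real N * (\<Sum>x\<in>X. lam x * occ N t x) + real N ^ 2 - (\<Sum>x\<in>X. occ N t x ^ 2)"
proof -
  have marg: "real N * (\<Sum>x\<in>X. lam x * marg1 X (sym_delta X N t) x) = (\<Sum>x\<in>X. lam x * occ N t x)"
    using marg1_sym_delta[OF t X N] N by (simp add: sum_distrib_left)
  have coeff: "real N * (real N - 1) * (2 * real N / (real N - 1)) = 2 * real N * real N"
    using N by (simp add: field_simps)
  have "real N * (real N - 1) * J_fun X N lam (sym_delta X N t)
      = real N * (real N - 1) * (2 * real N / (real N - 1))
          * (\<Sum>x\<in>X. lam x * marg1 X (sym_delta X N t) x)
        + real N * (real N - 1) * W_cost X (sym_delta X N t)"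
    unfolding J_fun_def by (simp only: distrib_left mult.assoc)
  also have "\<dots> = 2 * real N * (\<Sum>x\<in>X. lam x * occ N t x) + real N ^ 2 - (\<Sum>x\<in>X. occ N t x ^ 2)"
    unfolding coeff W_cost_sym_delta[OF t X N] marg[symmetric] by simp
  finally show ?thesis .
qed

lemma J_fun_sym_delta_gap:
  assumes t: "t \<in> tuples X N" and s: "s \<in> tuples X N" and X: "finite X" and N: "N \<ge> 2"
    and lam: "\<forall>x\<in>X. lam x = occ N s x / real N"
  shows "J_fun X N lam (sym_delta X N s) - J_fun X N lam (sym_delta X N t)
       = (\<Sum>x\<in>X. (occ N s x - occ N t x) ^ 2) / (real N * (real N - 1))"
proof -
  have lam_occ: "2 * real N * (\<Sum>x\<in>X. lam x * occ N u x) = 2 * (\<Sum>x\<in>X. occ N s x * occ N u x)" for u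
    using lam N by (simp add: sum_distrib_left)
  have "real N * (real N - 1) * (J_fun X N lam (sym_delta X N s) - J_fun X N lam (sym_delta X N t))
      = (2 * (\<Sum>x\<in>X. occ N s x * occ N s x) + real N ^ 2 - (\<Sum>x\<in>X. occ N s x ^ 2))
        - (2 * (\<Sum>x\<in>X. occ N s x * occ N t x) + real N ^ 2 - (\<Sum>x\<in>X. occ N t x ^ 2))"
    by (subst right_diff_distrib) (simp only: J_fun_sym_delta[OF s X N] J_fun_sym_delta[OF t X N] lam_occ)
  also have "\<dots> = (\<Sum>x\<in>X. (occ N s x - occ N t x) ^ 2)"
    by (simp add: power2_eq_square algebra_simps sum.distrib sum_subtractf sum_distrib_left)
  finally show ?thesis using N by (simp add: field_simps)
qed

lemma pair_marg_eq_sym_delta: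
  assumes \<gamma>: "prob_on (tuples X N) \<gamma>" and inv: "perm_invariant X N \<gamma>" and N: "N \<ge> 2"
    and supp: "\<forall>t\<in>tuples X N. 0 < \<gamma> t \<longrightarrow> same_occ X N t s"
  shows "pair_marg X N \<gamma> = sym_delta X N s"
proof
  fix p
  have "\<gamma> t * sym_delta X N t p = \<gamma> t * sym_delta X N s p" if "t \<in> tuples X N" for t
  proof (cases "0 < \<gamma> t")
    case True
    then show ?thesis using supp that sym_delta_cong by metis
  next
    case False
    then have "\<gamma> t = 0" using \<gamma> unfolding prob_on_def by (meson order.antisym not_less)
    then show ?thesis by simp
  qed
  then have "pair_marg X N \<gamma> p = (\<Sum>t\<in>tuples X N. \<gamma> t) * sym_delta X N s p"
    unfolding pair_marg_mixture[OF inv N] sum_distrib_right by (rule sum.cong[OF refl])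
  then show "pair_marg X N \<gamma> p = sym_delta X N s p"
    using \<gamma> unfolding prob_on_def by simp
qed

lemma J_fun_mixture_less:
  assumes \<gamma>: "prob_on (tuples X N) \<gamma>" and inv: "perm_invariant X N \<gamma>" and s: "s \<in> tuples X N"
    and X: "finite X" and N: "N \<ge> 2" and lam: "\<forall>x\<in>X. lam x = occ N s x / real N"
    and t': "t' \<in> tuples X N" "0 < \<gamma> t'" "\<not> same_occ X N t' s"
  shows "J_fun X N lam (pair_marg X N \<gamma>) < J_fun X N lam (sym_delta X N s)"
proof -
  let ?gap = "\<lambda>t. J_fun X N lam (sym_delta X N s) - J_fun X N lam (sym_delta X N t)"
  have D: "0 < real N * (real N - 1)" using N by simp
  have gap_nonneg: "0 \<le> ?gap t" if "t \<in> tuples X N" for t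
    unfolding J_fun_sym_delta_gap[OF that s X N lam] using D by (intro divide_nonneg_pos sum_nonneg) auto
  have "0 < ?gap t'"
  proof -
    obtain x where "x \<in> X" "occ N t' x \<noteq> occ N s x" using t'(3) unfolding same_occ_def by blast
    then have "0 < (\<Sum>x\<in>X. (occ N s x - occ N t' x) ^ 2)"
      using X by (intro sum_pos2[of X x]) auto
    then show ?thesis unfolding J_fun_sym_delta_gap[OF t'(1) s X N lam] using D by simp
  qed
  then have "0 < (\<Sum>t\<in>tuples X N. \<gamma> t * ?gap t)"
    using gap_nonneg \<gamma> t' finite_tuples[OF X] unfolding prob_on_def by (intro sum_pos2[of _ t']) auto
  also have "(\<Sum>t\<in>tuples X N. \<gamma> t * ?gap t)
      = J_fun X N lam (sym_delta X N s) - J_fun X N lam (pair_marg X N \<gamma>)"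
    using \<gamma> unfolding pair_marg_mixture[OF inv N] J_fun_mixture prob_on_def
    by (simp add: right_diff_distrib sum_subtractf sum_distrib_right[symmetric])
  finally show ?thesis by simp
qed

lemma J_fun_less_sym_delta:
  assumes X: "finite X" and N: "N \<ge> 2" and s: "s \<in> tuples X N"
    and lam: "\<forall>x\<in>X. lam x = occ N s x / real N"
    and \<mu>: "\<mu> \<in> N_rep X N" "\<mu> \<noteq> sym_delta X N s"
  shows "J_fun X N lam \<mu> < J_fun X N lam (sym_delta X N s)"
proof -
  obtain \<gamma> where \<gamma>: "prob_on (tuples X N) \<gamma>" and inv: "perm_invariant X N \<gamma>"
    and \<mu>_eq: "\<mu> = pair_marg X N \<gamma>"
    using \<mu>(1) N_rep_iff[OF X N] by blast
  then obtain t' where "t' \<in> tuples X N" "0 < \<gamma> t'" "\<not> same_occ X N t' s"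
    using pair_marg_eq_sym_delta[OF \<gamma> inv N] \<mu>(2) by blast
  then show ?thesis
    using J_fun_mixture_less[OF \<gamma> inv s X N lam] \<mu>_eq by simp
qed

lemma prob_on_ex_pos:
  assumes "prob_on T g"
  shows "\<exists>t\<in>T. 0 < g t"
proof -
  have "\<exists>t\<in>T. g t \<noteq> 0"
    using assms unfolding prob_on_def by (metis sum.neutral zero_neq_one)
  then show ?thesis using assms unfolding prob_on_def by (meson order.antisym not_less)
qed

definition cond_meas :: "('b \<Rightarrow> real) \<Rightarrow> 'b set \<Rightarrow> 'b \<Rightarrow> real" where
  "cond_meas g S t = (if t \<in> S then g t / meas g S else 0)"

lemma prob_on_cond_meas:
  assumes g: "prob_on T g" and "finite T" and "S \<subseteq> T" and pos: "0 < meas g S"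
  shows "prob_on T (cond_meas g S)"
  unfolding prob_on_def
proof (intro conjI allI impI)
  fix t show "0 \<le> cond_meas g S t"
    using g pos unfolding cond_meas_def prob_on_def by simp
next
  fix t assume "t \<notin> T" then show "cond_meas g S t = 0"
    using assms(3) unfolding cond_meas_def by auto
next
  have "(\<Sum>t\<in>T. cond_meas g S t) = (\<Sum>t\<in>S. g t / meas g S)"
    using assms(2,3) unfolding cond_meas_def by (simp add: sum.If_cases Int_absorb1)
  also have "\<dots> = 1" using pos unfolding meas_def by (simp add: sum_divide_distrib[symmetric])
  finally show "(\<Sum>t\<in>T. cond_meas g S t) = 1" .
qed

definition perm_closed :: "'a set \<Rightarrow> nat \<Rightarrow> (nat \<Rightarrow> 'a) set \<Rightarrow> bool" where
  "perm_closed X N S \<longleftrightarrow>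
     (\<forall>t\<in>tuples X N. \<forall>\<sigma>. \<sigma> permutes {..<N} \<longrightarrow> (permute_tuple N \<sigma> t \<in> S \<longleftrightarrow> t \<in> S))"

lemma perm_invariant_cond_meas:
  "perm_invariant X N g \<Longrightarrow> perm_closed X N S \<Longrightarrow> perm_invariant X N (cond_meas g S)"
  unfolding perm_invariant_def perm_closed_def cond_meas_def by auto

lemma perm_closed_tuples_Diff: "perm_closed X N S \<Longrightarrow> perm_closed X N (tuples X N - S)"
  unfolding perm_closed_def using permute_tuple_in_tuples by blast

lemma perm_closed_same_occ: "perm_closed X N {t \<in> tuples X N. same_occ X N t s}"
  unfolding perm_closed_def same_occ_def
  by (auto simp: occ_permute_tuple permute_tuple_in_tuples)

lemma pair_marg_convex_comb:
  assumes "\<forall>t\<in>tuples X N. g t = a * g1 t + b * g2 t"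
  shows "pair_marg X N g p = a * pair_marg X N g1 p + b * pair_marg X N g2 p"
  unfolding pair_marg_def using assms
  by (simp add: sum_distrib_left sum.distrib[symmetric] algebra_simps)

text \<open>\<open>\<gamma>\<close> is the mixture of its conditionings on \<open>S\<close> and on the complement, so \<open>pair_marg \<gamma>\<close>
  is a convex combination of two N-representable measures.\<close>
lemma extreme_pt_pair_marg_cond_meas:
  assumes X: "finite X" and N: "N \<ge> 2"
    and \<gamma>: "prob_on (tuples X N) \<gamma>" and inv: "perm_invariant X N \<gamma>"
    and ext: "extreme_pt (pair_marg X N \<gamma>) (N_rep X N)"
    and S: "S \<subseteq> tuples X N" "perm_closed X N S"
    and pos: "0 < meas \<gamma> S" "0 < meas \<gamma> (tuples X N - S)"
  shows "pair_marg X N (cond_meas \<gamma> S) = pair_marg X N (cond_meas \<gamma> (tuples X N - S))"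
proof (rule ccontr)
  assume ne: "pair_marg X N (cond_meas \<gamma> S) \<noteq> pair_marg X N (cond_meas \<gamma> (tuples X N - S))"
  let ?u = "meas \<gamma> (tuples X N - S)"
  have fin: "finite (tuples X N)" using finite_tuples[OF X] .
  have total: "meas \<gamma> S = 1 - ?u"
    using \<gamma> S(1) fin unfolding prob_on_def meas_def by (simp add: sum_diff)
  have in_N_rep: "pair_marg X N (cond_meas \<gamma> R) \<in> N_rep X N"
    if "R \<subseteq> tuples X N" "perm_closed X N R" "0 < meas \<gamma> R" for R
    using N_rep_iff[OF X N] prob_on_cond_meas[OF \<gamma> fin that(1,3)]
      perm_invariant_cond_meas[OF inv that(2)] by blast
  have "\<forall>t\<in>tuples X N. \<gamma> t = (1 - ?u) * cond_meas \<gamma> S t + ?u * cond_meas \<gamma> (tuples X N - S) t"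
    using pos unfolding total[symmetric] cond_meas_def by auto
  then have "pair_marg X N \<gamma> = (\<lambda>p. (1 - ?u) * pair_marg X N (cond_meas \<gamma> S) p
      + ?u * pair_marg X N (cond_meas \<gamma> (tuples X N - S)) p)"
    using pair_marg_convex_comb by blast
  moreover have "0 < ?u \<and> ?u < 1 \<and>
      pair_marg X N (cond_meas \<gamma> S) \<noteq> pair_marg X N (cond_meas \<gamma> (tuples X N - S))"
    using pos total ne by simp
  ultimately show False
    using ext[unfolded extreme_pt_def, THEN conjunct2, rule_format, OF in_N_rep[OF S pos(1)]
        in_N_rep[OF Diff_subset perm_closed_tuples_Diff[OF S(2)] pos(2)]]
    by blast
qed

lemma extreme_pt_N_rep_sym_delta:
  assumes X: "finite X" and N: "N \<ge> 2" and ext: "extreme_pt \<mu> (N_rep X N)"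
  obtains s where "s \<in> tuples X N" and "\<mu> = sym_delta X N s"
proof -
  have "\<mu> \<in> N_rep X N" using ext by (simp add: extreme_pt_def)
  then obtain \<gamma> where \<gamma>: "prob_on (tuples X N) \<gamma>" and inv: "perm_invariant X N \<gamma>"
    and \<mu>: "\<mu> = pair_marg X N \<gamma>"
    using N_rep_iff[OF X N] by blast
  obtain s where s: "s \<in> tuples X N" "0 < \<gamma> s"
    using prob_on_ex_pos[OF \<gamma>] by blast
  define S where "S = {t \<in> tuples X N. same_occ X N t s}"
  have "\<forall>t\<in>tuples X N. 0 < \<gamma> t \<longrightarrow> same_occ X N t s"
  proof (rule ccontr)
    assume "\<not> ?thesis"
    then obtain t' where t': "t' \<in> tuples X N" "0 < \<gamma> t'" "\<not> same_occ X N t' s" by blast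
    have fin: "finite (tuples X N)" using finite_tuples[OF X] .
    have nonneg: "0 \<le> \<gamma> t" for t using \<gamma> unfolding prob_on_def by blast
    have S_closed: "perm_closed X N S"
      unfolding S_def by (rule perm_closed_same_occ)
    have "\<gamma> s \<le> meas \<gamma> S" "\<gamma> t' \<le> meas \<gamma> (tuples X N - S)"
      unfolding meas_def using s t' fin nonneg by (auto simp: S_def same_occ_def intro!: member_le_sum)
    then have pos: "0 < meas \<gamma> S" "0 < meas \<gamma> (tuples X N - S)" using s t' by linarith+
    let ?\<gamma>S = "cond_meas \<gamma> S" and ?\<gamma>S' = "cond_meas \<gamma> (tuples X N - S)"
    have \<gamma>S: "prob_on (tuples X N) ?\<gamma>S" "perm_invariant X N ?\<gamma>S"
      using prob_on_cond_meas[OF \<gamma> fin _ pos(1)] perm_invariant_cond_meas[OF inv S_closed]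
      by (auto simp: S_def)
    have \<gamma>S': "prob_on (tuples X N) ?\<gamma>S'" "perm_invariant X N ?\<gamma>S'"
      using prob_on_cond_meas[OF \<gamma> fin _ pos(2)]
        perm_invariant_cond_meas[OF inv perm_closed_tuples_Diff[OF S_closed]] by auto
    have "pair_marg X N ?\<gamma>S = sym_delta X N s"
      using pair_marg_eq_sym_delta[OF \<gamma>S N] by (simp add: cond_meas_def S_def)
    moreover have "0 < ?\<gamma>S' t'" using t' pos(2) by (simp add: cond_meas_def S_def)
    then have "J_fun X N (\<lambda>x. occ N s x / real N) (pair_marg X N ?\<gamma>S')
        < J_fun X N (\<lambda>x. occ N s x / real N) (sym_delta X N s)"
      using J_fun_mixture_less[OF \<gamma>S' s(1) X N _ t'(1) _ t'(3)] by simp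
    moreover have "pair_marg X N ?\<gamma>S = pair_marg X N ?\<gamma>S'"
      using extreme_pt_pair_marg_cond_meas[OF X N \<gamma> inv ext[unfolded \<mu>] _ S_closed pos]
      by (simp add: S_def)
    ultimately show False by simp
  qed
  then show thesis using that s(1) pair_marg_eq_sym_delta[OF \<gamma> inv N] \<mu> by blast
qed

theorem corollary2p6:
  fixes X :: "'a set" and N :: nat and \<mu>s :: "'a \<times> 'a \<Rightarrow> real" and lam :: "'a \<Rightarrow> real"
  assumes "finite X" and "N \<ge> 2"
    and "extreme_pt \<mu>s (N_rep X N)"
    and "lam = marg1 X \<mu>s"
  shows "(\<forall>\<mu>\<in>N_rep X N. \<mu> \<noteq> \<mu>s \<longrightarrow> J_fun X N lam \<mu> < J_fun X N lam \<mu>s)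
       \<and> (\<forall>\<mu>\<in>N_rep X N. marg1 X \<mu> = lam \<and> \<mu> \<noteq> \<mu>s \<longrightarrow> W_cost X \<mu> < W_cost X \<mu>s)"
proof -
  obtain s where s: "s \<in> tuples X N" and \<mu>s: "\<mu>s = sym_delta X N s"
    using extreme_pt_N_rep_sym_delta[OF assms(1-3)] .
  have "\<forall>x\<in>X. lam x = occ N s x / real N"
    using assms(4) marg1_sym_delta[OF s assms(1,2)] \<mu>s by simp
  then have J_less: "\<forall>\<mu>\<in>N_rep X N. \<mu> \<noteq> \<mu>s \<longrightarrow> J_fun X N lam \<mu> < J_fun X N lam \<mu>s"
    using J_fun_less_sym_delta[OF assms(1,2) s] \<mu>s by blast
  moreover have "\<forall>\<mu>\<in>N_rep X N. marg1 X \<mu> = lam \<and> \<mu> \<noteq> \<mu>s \<longrightarrow> W_cost X \<mu> < W_cost X \<mu>s"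
    using J_less assms(4) unfolding J_fun_def by auto
  ultimately show ?thesis ..
qed

end
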